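(* Let $\mathbf{x}$ be a set of $d'$ distinct real numbers, let $[L,R]$ be an interval of integers (with $L\le R$), and let $n\le d'$ be a nonnegative integer. Consider any probabilistic process $P$ that chooses a uniformly random subset $S\subseteq\mathbf{x}$ of size $n$ and then selects (arbitrarily, possibly depending on $S$) a real interval $I=[I_\ell,I_r]$ such that $|S\cap I|\in[L,R]$. Then \[ \mathop{\mathbb{P}}_{(S,I)\sim P}\left[|\mathbf{x}\cap I|\in\left(\frac12L\frac{d'}{n},\,2R\frac{d'}{n}\right)\right]\ge 1-3d'\exp\left(-\frac{L}{6}\right). \] *)

theory Defs
  imports "HOL-Probability.Probability"
begin

text \<open>The process P: draw S uniformly among the n-subsets of xs, then draw the
  interval endpoints (a,b) (with a \<le> b) from a distribution K S that may depend on S,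
  supported on intervals I = {a..b} with |S \<inter> I| in [L,R].\<close>

definition interval_process ::
  "real set \<Rightarrow> nat \<Rightarrow> (real set \<Rightarrow> (real \<times> real) pmf) \<Rightarrow> (real set \<times> (real \<times> real)) pmf" where
  "interval_process xs n K =
     bind_pmf (pmf_of_set {S. S \<subseteq> xs \<and> card S = n}) (\<lambda>S. map_pmf (\<lambda>I. (S, I)) (K S))"

end

theory Submission
  imports Defs
begin

(*
  For a point x of xs consider the longest run xs \<inter> {x..y} containing at most c1 = L d'/(2n)
  points of xs, and the shortest one containing at least c2 = 2R d'/n points. If the selected
  interval contains too few points of xs, it lies inside the first run of its leftmost point,
  which then meets S in at least L points; if it contains too many, it contains the second run,
  which then meets S in at most R points. A run is a fixed set B, so |S \<inter> B| is hypergeometric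
  with mean |B| n/d', at most L/2 resp. at least 2R, and Chernoff bounds (Markov's inequality
  for 2^|S \<inter> B| resp. 2^|B - S|) give each of these 2d' events probability at most exp(-L/6).
  The hypergeometric moment generating function is dominated by the binomial one because a
  uniform n-subset contains a given t-set with probability at most (n/d')^t.
*)

section \<open>Hypergeometric tail bounds\<close>

lemma sum_Pow_power_card:
  fixes c :: "'a::comm_semiring_1"
  assumes "finite A"
  shows "(\<Sum>T\<in>Pow A. c ^ card T) = (1 + c) ^ card A"
  using prod_add[OF assms, of "\<lambda>_. c" "\<lambda>_. 1"] by (simp add: add.commute)

lemma binomial_diff_mult_power_le:
  fixes k n N :: nat
  assumes "k \<le> n" "n \<le> N"
  shows "((N - k) choose (n - k)) * N ^ k \<le> n ^ k * (N choose n)"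
  using assms(1)
proof (induction k)
  case 0
  show ?case by simp
next
  case (Suc k)
  then have "k < n" by simp
  have pascal: "(N - k) * ((N - Suc k) choose (n - Suc k)) = (n - k) * ((N - k) choose (n - k))"
    using Suc_times_binomial_eq[of "N - Suc k" "n - Suc k"] \<open>k < n\<close> assms(2)
    by (simp add: Suc_diff_Suc mult.commute)
  have ratio: "(n - k) * N \<le> (N - k) * n"
  proof -
    have "(n - k) * N = n * N - k * N"
      by (simp add: diff_mult_distrib)
    also have "\<dots> \<le> n * N - k * n"
      using assms(2) by (intro diff_le_mono2) simp
    also have "\<dots> = (N - k) * n"
      by (simp add: diff_mult_distrib2 mult.commute)
    finally show ?thesis .
  qed
  have "(N - k) * (((N - Suc k) choose (n - Suc k)) * N ^ Suc k)
      = (n - k) * N * (((N - k) choose (n - k)) * N ^ k)"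
    by (simp add: pascal flip: mult.assoc)
  also have "\<dots> \<le> (n - k) * N * (n ^ k * (N choose n))"
    using Suc by (intro mult_left_mono) auto
  also have "\<dots> \<le> (N - k) * n * (n ^ k * (N choose n))"
    using ratio by (rule mult_right_mono) simp
  also have "\<dots> = (N - k) * (n ^ Suc k * (N choose n))"
    by simp
  finally show ?case
    using \<open>k < n\<close> assms(2) by simp
qed

lemma card_supersets_of_card:
  assumes "finite U" "T \<subseteq> U" "card T \<le> n"
  shows "card {S. S \<subseteq> U \<and> card S = n \<and> T \<subseteq> S} = (card U - card T) choose (n - card T)"
proof -
  have "finite T"
    using assms finite_subset by blast
  have "bij_betw (\<lambda>S. S - T)
          {S. S \<subseteq> U \<and> card S = n \<and> T \<subseteq> S} {S. S \<subseteq> U - T \<and> card S = n - card T}"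
  proof (rule bij_betw_byWitness[where f' = "\<lambda>S. S \<union> T"])
    show "(\<lambda>S. S \<union> T) ` {S. S \<subseteq> U - T \<and> card S = n - card T}
        \<subseteq> {S. S \<subseteq> U \<and> card S = n \<and> T \<subseteq> S}"
    proof clarify
      fix S assume S: "S \<subseteq> U - T" "card S = n - card T"
      then have "card (S \<union> T) = card S + card T"
        using assms \<open>finite T\<close> by (intro card_Un_disjoint) (auto dest: finite_subset)
      then show "S \<union> T \<subseteq> U \<and> card (S \<union> T) = n \<and> T \<subseteq> S \<union> T"
        using S assms by auto
    qed
  qed (use assms \<open>finite T\<close> in \<open>auto simp: card_Diff_subset\<close>)
  then have "card {S. S \<subseteq> U \<and> card S = n \<and> T \<subseteq> S}
      = card {S. S \<subseteq> U - T \<and> card S = n - card T}"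
    by (rule bij_betw_same_card)
  also have "\<dots> = (card U - card T) choose (n - card T)"
    using assms \<open>finite T\<close> by (simp add: n_subsets card_Diff_subset)
  finally show ?thesis .
qed

lemma card_supersets_mult_power_le:
  assumes "finite U" "T \<subseteq> U"
  shows "card {S. S \<subseteq> U \<and> card S = n \<and> T \<subseteq> S} * card U ^ card T
         \<le> n ^ card T * card {S. S \<subseteq> U \<and> card S = n}"
proof (cases "card T \<le> n \<and> n \<le> card U")
  case True
  then show ?thesis
    using binomial_diff_mult_power_le[of "card T" n "card U"]
    by (simp add: card_supersets_of_card assms n_subsets)
next
  case False
  have "card T \<le> card S \<and> card S \<le> card U" if "S \<subseteq> U" "T \<subseteq> S" for S
    using that assms by (meson card_mono finite_subset)
  with False have none: "{S. S \<subseteq> U \<and> card S = n \<and> T \<subseteq> S} = {}"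
    by fastforce
  show ?thesis
    unfolding none by simp
qed

lemma sum_power_card_Int_le:
  fixes c :: real
  assumes "finite U" "B \<subseteq> U" "0 \<le> c"
  shows "(\<Sum>S\<in>{S. S \<subseteq> U \<and> card S = n}. (1 + c) ^ card (S \<inter> B))
         \<le> (1 + c * n / card U) ^ card B * card {S. S \<subseteq> U \<and> card S = n}"
proof -
  define SS where "SS = {S. S \<subseteq> U \<and> card S = n}"
  have "finite SS"
    unfolding SS_def using assms(1) by simp
  have "finite B"
    using assms(1,2) by (rule finite_subset[rotated])
  have expand: "(1 + c) ^ card (S \<inter> B) = (\<Sum>T\<in>Pow B. if T \<subseteq> S then c ^ card T else 0)" for S
  proof -
    have "(1 + c) ^ card (S \<inter> B) = (\<Sum>T\<in>Pow (S \<inter> B). c ^ card T)"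
      by (rule sum_Pow_power_card[symmetric]) (use \<open>finite B\<close> in simp)
    also have "Pow (S \<inter> B) = {T \<in> Pow B. T \<subseteq> S}"
      by auto
    also have "(\<Sum>T\<in>{T \<in> Pow B. T \<subseteq> S}. c ^ card T)
        = (\<Sum>T\<in>Pow B. if T \<subseteq> S then c ^ card T else 0)"
      by (rule sum.inter_filter) (use \<open>finite B\<close> in simp)
    finally show ?thesis .
  qed
  have count: "(\<Sum>S\<in>SS. if T \<subseteq> S then c ^ card T else 0) \<le> (c * n / card U) ^ card T * card SS"
    if "T \<subseteq> U" for T
  proof -
    define sup where "sup = {S \<in> SS. T \<subseteq> S}"
    have "sup = {S. S \<subseteq> U \<and> card S = n \<and> T \<subseteq> S}"
      unfolding sup_def SS_def by auto
    then have "card sup * card U ^ card T \<le> n ^ card T * card SS"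
      unfolding SS_def using card_supersets_mult_power_le[OF assms(1) that] by simp
    then have sup_le: "real (card sup) * card U ^ card T \<le> real n ^ card T * card SS"
      by (metis of_nat_le_iff of_nat_mult of_nat_power)
    have "real (card sup) \<le> (n / card U) ^ card T * card SS"
    proof (cases "U = {}")
      case True
      then show ?thesis
        using sup_le that by simp
    next
      case False
      then have "0 < real (card U) ^ card T"
        using assms(1) by (simp add: card_gt_0_iff)
      then show ?thesis
        using sup_le by (simp add: power_divide pos_le_divide_eq)
    qed
    then have "c ^ card T * card sup \<le> c ^ card T * ((n / card U) ^ card T * card SS)"
      using assms(3) by (intro mult_left_mono) auto
    moreover have "(\<Sum>S\<in>SS. if T \<subseteq> S then c ^ card T else 0) = c ^ card T * card sup"
      unfolding sup_def using \<open>finite SS\<close> by (simp flip: sum.inter_filter)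
    ultimately show ?thesis
      by (simp add: power_mult_distrib power_divide)
  qed
  have "(\<Sum>S\<in>SS. (1 + c) ^ card (S \<inter> B))
      = (\<Sum>T\<in>Pow B. \<Sum>S\<in>SS. if T \<subseteq> S then c ^ card T else 0)"
    unfolding expand by (rule sum.swap)
  also have "\<dots> \<le> (\<Sum>T\<in>Pow B. (c * n / card U) ^ card T * card SS)"
    using assms(2) by (intro sum_mono count) auto
  also have "\<dots> = (1 + c * n / card U) ^ card B * card SS"
    using \<open>finite B\<close> by (simp add: sum_Pow_power_card flip: sum_distrib_right)
  finally show ?thesis
    unfolding SS_def .
qed

lemma sum_power_card_Diff_le:
  fixes c :: real
  assumes "finite U" "B \<subseteq> U" "0 \<le> c" "n \<le> card U"
  shows "(\<Sum>S\<in>{S. S \<subseteq> U \<and> card S = n}. (1 + c) ^ card (B - S))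
         \<le> (1 + c * real (card U - n) / card U) ^ card B * card {S. S \<subseteq> U \<and> card S = n}"
proof -
  define SS where "SS = {S. S \<subseteq> U \<and> card S = n}"
  define SS' where "SS' = {S. S \<subseteq> U \<and> card S = card U - n}"
  have card_compl: "card (U - S) = card U - card S" if "S \<subseteq> U" for S
    using that assms(1) by (simp add: card_Diff_subset finite_subset)
  have bij: "bij_betw (\<lambda>S. U - S) SS' SS"
    by (rule bij_betw_byWitness[where f' = "\<lambda>S. U - S"])
      (use assms(4) in \<open>auto simp: SS_def SS'_def card_compl\<close>)
  have "(\<Sum>S\<in>SS. (1 + c) ^ card (B - S)) = (\<Sum>S\<in>SS'. (1 + c) ^ card (B - (U - S)))"
    using sum.reindex_bij_betw[OF bij, of "\<lambda>S. (1 + c) ^ card (B - S)"] by simp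
  also have "\<dots> = (\<Sum>S\<in>SS'. (1 + c) ^ card (S \<inter> B))"
    using assms(2) by (intro sum.cong arg_cong[where f = "\<lambda>A. (1 + c) ^ card A"]) auto
  also have "\<dots> \<le> (1 + c * real (card U - n) / card U) ^ card B * card SS'"
    unfolding SS'_def by (rule sum_power_card_Int_le[OF assms(1-3)])
  also have "card SS' = card SS"
    using bij by (rule bij_betw_same_card)
  finally show ?thesis
    unfolding SS_def .
qed

lemma exp_le_two_power: "exp (2/3 * real k) \<le> 2 ^ k"
proof -
  have "exp (2/3 * real k) \<le> exp (ln 2 * real k)"
    using mult_right_mono[OF ln2_ge_two_thirds] by simp
  also have "\<dots> = 2 ^ k"
    by (simp add: exp_of_nat_mult mult.commute)
  finally show ?thesis .
qed

lemma two_power_le_exp: "2 ^ k \<le> exp (5/6 * real k)"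
proof -
  have "(2::real) ^ k = exp (ln 2 * real k)"
    by (simp add: exp_of_nat_mult mult.commute)
  also have "\<dots> \<le> exp (5/6 * real k)"
  proof -
    have "ln 2 \<le> (5/6::real)"
      using ln2_le_25_over_36 by simp
    then have "ln 2 * real k \<le> 5/6 * real k"
      by (rule mult_right_mono) simp
    then show ?thesis
      by simp
  qed
  finally show ?thesis .
qed

lemma two_minus_power_le_exp:
  fixes p :: real
  assumes "0 \<le> p" "p \<le> 2"
  shows "(2 - p) ^ m \<le> 2 ^ m * exp (- (m * p) / 2)"
proof -
  have "(2 - p) ^ m = 2 ^ m * (1 - p / 2) ^ m"
    by (simp flip: power_mult_distrib)
  also have "\<dots> \<le> 2 ^ m * exp (- p / 2) ^ m"
    using assms exp_ge_add_one_self[of "- p / 2"] by (intro mult_left_mono power_mono) auto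
  also have "exp (- p / 2) ^ m = exp (- (m * p) / 2)"
    by (simp flip: exp_of_nat_mult)
  finally show ?thesis .
qed

lemma hypergeometric_upper_tail:
  assumes "finite U" "B \<subseteq> U" "U \<noteq> {}"
    and mean: "real (card B) * n \<le> real l * card U / 2"
  shows "real (card {S. S \<subseteq> U \<and> card S = n \<and> l \<le> card (S \<inter> B)})
         \<le> exp (- real l / 6) * card {S. S \<subseteq> U \<and> card S = n}"
proof -
  define SS where "SS = {S. S \<subseteq> U \<and> card S = n}"
  define E where "E = {S. S \<subseteq> U \<and> card S = n \<and> l \<le> card (S \<inter> B)}"
  define p where "p = real n / card U"
  have "finite SS" "E \<subseteq> SS"
    unfolding SS_def E_def using assms(1) by auto
  have "card U > 0"
    using assms(1,3) by (simp add: card_gt_0_iff)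
  then have "0 \<le> p" "card B * p \<le> l / 2"
    using mean by (auto simp: p_def field_simps)
  have "exp (2/3 * real l) * card E \<le> (2::real) ^ l * card E"
    by (intro mult_right_mono exp_le_two_power) simp
  also have "\<dots> = (\<Sum>S\<in>E. 2 ^ l)"
    by simp
  also have "\<dots> \<le> (\<Sum>S\<in>E. 2 ^ card (S \<inter> B))"
    by (intro sum_mono power_increasing) (auto simp: E_def)
  also have "\<dots> \<le> (\<Sum>S\<in>SS. 2 ^ card (S \<inter> B))"
    using \<open>finite SS\<close> \<open>E \<subseteq> SS\<close> by (intro sum_mono2) auto
  also have "\<dots> \<le> (1 + p) ^ card B * card SS"
    using sum_power_card_Int_le[OF assms(1,2), of 1 n] unfolding SS_def p_def by simp
  also have "\<dots> \<le> exp p ^ card B * card SS"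
    using \<open>0 \<le> p\<close> by (intro mult_right_mono power_mono exp_ge_add_one_self) auto
  also have "\<dots> = exp (card B * p) * card SS"
    by (simp add: exp_of_nat_mult)
  also have "\<dots> \<le> exp (l / 2) * card SS"
    using \<open>card B * p \<le> l / 2\<close> by (intro mult_right_mono) auto
  also have "\<dots> = exp (2/3 * real l) * (exp (- real l / 6) * card SS)"
    by (simp add: mult.assoc flip: exp_add)
  finally show ?thesis
    unfolding E_def SS_def by simp
qed

lemma hypergeometric_lower_tail:
  assumes "finite U" "B \<subseteq> U" "U \<noteq> {}" "n \<le> card U"
    and mean: "2 * real r * card U \<le> real (card B) * n"
  shows "real (card {S. S \<subseteq> U \<and> card S = n \<and> card (S \<inter> B) \<le> r})
         \<le> exp (- real r / 6) * card {S. S \<subseteq> U \<and> card S = n}"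
proof -
  define SS where "SS = {S. S \<subseteq> U \<and> card S = n}"
  define E where "E = {S. S \<subseteq> U \<and> card S = n \<and> card (S \<inter> B) \<le> r}"
  define p where "p = real n / card U"
  define m where "m = card B"
  have "finite SS" "E \<subseteq> SS"
    unfolding SS_def E_def using assms(1) by auto
  have "finite B"
    using assms(1,2) by (rule finite_subset[rotated])
  have "card U > 0"
    using assms(1,3) by (simp add: card_gt_0_iff)
  then have "0 \<le> p" "p \<le> 1" "2 * r \<le> m * p"
    using assms(4) mean by (auto simp: p_def m_def field_simps)
  have "(2 - p) ^ m \<le> 2 ^ m * exp (- (m * p) / 2)"
    using \<open>0 \<le> p\<close> \<open>p \<le> 1\<close> by (intro two_minus_power_le_exp) auto
  also have "\<dots> \<le> 2 ^ m * exp (- real r)"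
    using \<open>2 * r \<le> m * p\<close> by (intro mult_left_mono) auto
  finally have decay: "(2 - p) ^ m \<le> 2 ^ m * exp (- real r)" .
  have "m \<le> r + card (B - S)" if "S \<in> E" for S
    using that \<open>finite B\<close> card_Int_Diff[of B S] by (auto simp: E_def m_def Int_commute)
  then have "(\<Sum>S\<in>E. (2::real) ^ m) \<le> (\<Sum>S\<in>E. 2 ^ r * 2 ^ card (B - S))"
    by (intro sum_mono) (simp flip: power_add)
  then have "(2::real) ^ m * card E \<le> 2 ^ r * (\<Sum>S\<in>E. 2 ^ card (B - S))"
    by (simp add: sum_distrib_left mult.commute)
  also have "\<dots> \<le> 2 ^ r * (\<Sum>S\<in>SS. 2 ^ card (B - S))"
    using \<open>finite SS\<close> \<open>E \<subseteq> SS\<close> by (intro mult_left_mono sum_mono2) auto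
  also have "\<dots> \<le> 2 ^ r * ((2 - p) ^ m * card SS)"
    using sum_power_card_Diff_le[OF assms(1,2), of 1 n] assms(3,4) \<open>card U > 0\<close>
    unfolding SS_def p_def m_def by (simp add: of_nat_diff diff_divide_distrib)
  also have "\<dots> \<le> 2 ^ r * (2 ^ m * exp (- real r) * card SS)"
    using decay by (intro mult_left_mono mult_right_mono) auto
  finally have "(2::real) ^ m * card E \<le> 2 ^ m * (2 ^ r * exp (- real r) * card SS)"
    by (simp add: mult_ac)
  then have "card E \<le> 2 ^ r * exp (- real r) * card SS"
    by simp
  also have "\<dots> \<le> exp (5/6 * real r) * exp (- real r) * card SS"
    by (intro mult_right_mono two_power_le_exp) auto
  also have "\<dots> = exp (- real r / 6) * card SS"
    by (simp flip: exp_add)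
  finally show ?thesis
    unfolding E_def SS_def .
qed

section \<open>Runs of points and the union bound\<close>

definition sparse_ends :: "'a::linorder set \<Rightarrow> real \<Rightarrow> 'a \<Rightarrow> 'a set" where
  "sparse_ends X c x = {y \<in> X. x \<le> y \<and> real (card (X \<inter> {x..y})) \<le> c}"

definition dense_ends :: "'a::linorder set \<Rightarrow> real \<Rightarrow> 'a \<Rightarrow> 'a set" where
  "dense_ends X c x = {y \<in> X. x \<le> y \<and> c \<le> real (card (X \<inter> {x..y}))}"

(* Max (sparse_ends X c x) is the right end of the longest run X \<inter> {x..y} with at most c points,
   Min (dense_ends X c x) that of the shortest run with at least c points; the guards exclude the
   junk values Max {} and Min {}. *)
definition heavy_samples :: "'a::linorder set \<Rightarrow> real \<Rightarrow> nat \<Rightarrow> 'a \<Rightarrow> 'a set set" where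
  "heavy_samples X c l x =
     {S. sparse_ends X c x \<noteq> {} \<and> l \<le> card (S \<inter> {x..Max (sparse_ends X c x)})}"

definition light_samples :: "'a::linorder set \<Rightarrow> real \<Rightarrow> nat \<Rightarrow> 'a \<Rightarrow> 'a set set" where
  "light_samples X c r x =
     {S. dense_ends X c x \<noteq> {} \<and> card (S \<inter> {x..Min (dense_ends X c x)}) \<le> r}"

lemma Int_atLeastAtMost_Min_Max:
  fixes X :: "'a::linorder set"
  assumes "finite X" "X \<inter> {a..b} \<noteq> {}"
  shows "X \<inter> {Min (X \<inter> {a..b})..Max (X \<inter> {a..b})} = X \<inter> {a..b}"
proof -
  have "Min (X \<inter> {a..b}) \<in> X \<inter> {a..b}" "Max (X \<inter> {a..b}) \<in> X \<inter> {a..b}"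
    using Min_in[of "X \<inter> {a..b}"] Max_in[of "X \<inter> {a..b}"] assms by simp_all
  moreover have "Min (X \<inter> {a..b}) \<le> y \<and> y \<le> Max (X \<inter> {a..b})" if "y \<in> X \<inter> {a..b}" for y
    using assms that by simp
  ultimately show ?thesis
    by auto
qed

lemma heavy_samplesI:
  fixes X S :: "'a::linorder set"
  assumes "finite X" "finite S" "y \<in> X" "x \<le> y"
    and "real (card (X \<inter> {x..y})) \<le> c" "l \<le> card (S \<inter> {x..y})"
  shows "S \<in> heavy_samples X c l x"
proof -
  have "y \<in> sparse_ends X c x" "finite (sparse_ends X c x)"
    using assms by (simp_all add: sparse_ends_def)
  then have "sparse_ends X c x \<noteq> {}" "y \<le> Max (sparse_ends X c x)"
    by auto
  moreover from this have "card (S \<inter> {x..y}) \<le> card (S \<inter> {x..Max (sparse_ends X c x)})"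
    using assms(2) by (intro card_mono) auto
  ultimately show ?thesis
    using assms(6) by (simp add: heavy_samples_def)
qed

lemma light_samplesI:
  fixes X S :: "'a::linorder set"
  assumes "finite X" "finite S" "y \<in> X" "x \<le> y"
    and "c \<le> real (card (X \<inter> {x..y}))" "card (S \<inter> {x..y}) \<le> r"
  shows "S \<in> light_samples X c r x"
proof -
  have "y \<in> dense_ends X c x" "finite (dense_ends X c x)"
    using assms by (simp_all add: dense_ends_def)
  then have "dense_ends X c x \<noteq> {}" "Min (dense_ends X c x) \<le> y"
    by auto
  moreover from this have "card (S \<inter> {x..Min (dense_ends X c x)}) \<le> card (S \<inter> {x..y})"
    using assms(2) by (intro card_mono) auto
  ultimately show ?thesis
    using assms(6) by (simp add: light_samples_def)
qed

lemma interval_sample_heavy_or_light: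
  fixes X S :: "'a::linorder set"
  assumes "finite X" "S \<subseteq> X" "0 < l" "l \<le> card (S \<inter> {a..b})" "card (S \<inter> {a..b}) \<le> r"
    and "\<not> (c1 < real (card (X \<inter> {a..b})) \<and> real (card (X \<inter> {a..b})) < c2)"
  shows "\<exists>x\<in>X. S \<in> heavy_samples X c1 l x \<union> light_samples X c2 r x"
proof -
  define J where "J = X \<inter> {a..b}"
  define x y where "x = Min J" and "y = Max J"
  have "finite S" "finite J"
    using assms(1,2) finite_subset unfolding J_def by auto
  have "S \<inter> {a..b} \<noteq> {}"
    using assms(3,4) by auto
  then have "J \<noteq> {}"
    using assms(2) unfolding J_def by blast
  then have "x \<in> J" "y \<in> J"
    using \<open>finite J\<close> unfolding x_def y_def by simp_all
  then have "x \<in> X" "y \<in> X" "x \<le> y"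
    using \<open>finite J\<close> unfolding J_def x_def by auto
  have J_eq: "X \<inter> {x..y} = J"
    using Int_atLeastAtMost_Min_Max[OF assms(1)] \<open>J \<noteq> {}\<close> unfolding x_def y_def J_def by blast
  then have hits: "S \<inter> {x..y} = S \<inter> {a..b}"
    using assms(2) unfolding J_def by blast
  consider "real (card J) \<le> c1" | "c2 \<le> real (card J)"
    using assms(6) unfolding J_def by linarith
  then show ?thesis
  proof cases
    case 1
    then have "S \<in> heavy_samples X c1 l x"
      using J_eq hits assms(4)
      by (intro heavy_samplesI[OF assms(1) \<open>finite S\<close> \<open>y \<in> X\<close> \<open>x \<le> y\<close>]) simp_all
    then show ?thesis
      using \<open>x \<in> X\<close> by blast
  next
    case 2
    then have "S \<in> light_samples X c2 r x"
      using J_eq hits assms(5)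
      by (intro light_samplesI[OF assms(1) \<open>finite S\<close> \<open>y \<in> X\<close> \<open>x \<le> y\<close>]) simp_all
    then show ?thesis
      using \<open>x \<in> X\<close> by blast
  qed
qed

lemma card_heavy_samples_le:
  fixes X :: "'a::linorder set" and c :: real
  assumes "finite X" "X \<noteq> {}" "c * n \<le> real l * card X / 2"
  shows "real (card {S. S \<subseteq> X \<and> card S = n \<and> S \<in> heavy_samples X c l x})
         \<le> exp (- real l / 6) * card {S. S \<subseteq> X \<and> card S = n}"
proof (cases "sparse_ends X c x = {}")
  case True
  then show ?thesis
    by (simp add: heavy_samples_def)
next
  case False
  define B where "B = X \<inter> {x..Max (sparse_ends X c x)}"
  have "Max (sparse_ends X c x) \<in> sparse_ends X c x"
    using False assms(1) by (intro Max_in) (simp_all add: sparse_ends_def)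
  then have "card B \<le> c"
    unfolding B_def sparse_ends_def by simp
  then have "real (card B) * n \<le> real l * card X / 2"
    using assms(3) by (meson mult_right_mono of_nat_0_le_iff order_trans)
  then have tail: "real (card {S. S \<subseteq> X \<and> card S = n \<and> l \<le> card (S \<inter> B)})
      \<le> exp (- real l / 6) * card {S. S \<subseteq> X \<and> card S = n}"
    using assms(1,2) by (intro hypergeometric_upper_tail) (auto simp: B_def)
  have "{S. S \<subseteq> X \<and> card S = n \<and> S \<in> heavy_samples X c l x}
      \<subseteq> {S. S \<subseteq> X \<and> card S = n \<and> l \<le> card (S \<inter> B)}"
    unfolding heavy_samples_def B_def by (auto simp: Int_absorb2 simp flip: Int_assoc)
  then have "card {S. S \<subseteq> X \<and> card S = n \<and> S \<in> heavy_samples X c l x}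
      \<le> card {S. S \<subseteq> X \<and> card S = n \<and> l \<le> card (S \<inter> B)}"
    using assms(1) by (intro card_mono) auto
  with tail show ?thesis
    by linarith
qed

lemma card_light_samples_le:
  fixes X :: "'a::linorder set" and c :: real
  assumes "finite X" "X \<noteq> {}" "n \<le> card X" "2 * real r * card X \<le> c * n"
  shows "real (card {S. S \<subseteq> X \<and> card S = n \<and> S \<in> light_samples X c r x})
         \<le> exp (- real r / 6) * card {S. S \<subseteq> X \<and> card S = n}"
proof (cases "dense_ends X c x = {}")
  case True
  then show ?thesis
    by (simp add: light_samples_def)
next
  case False
  define B where "B = X \<inter> {x..Min (dense_ends X c x)}"
  have "Min (dense_ends X c x) \<in> dense_ends X c x"
    using False assms(1) by (intro Min_in) (simp_all add: dense_ends_def)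
  then have "c \<le> card B"
    unfolding B_def dense_ends_def by simp
  then have "2 * real r * card X \<le> real (card B) * n"
    using assms(4) by (meson mult_right_mono of_nat_0_le_iff order_trans)
  then have tail: "real (card {S. S \<subseteq> X \<and> card S = n \<and> card (S \<inter> B) \<le> r})
      \<le> exp (- real r / 6) * card {S. S \<subseteq> X \<and> card S = n}"
    using assms(1-3) by (intro hypergeometric_lower_tail) (auto simp: B_def)
  have "{S. S \<subseteq> X \<and> card S = n \<and> S \<in> light_samples X c r x}
      \<subseteq> {S. S \<subseteq> X \<and> card S = n \<and> card (S \<inter> B) \<le> r}"
    unfolding light_samples_def B_def by (auto simp: Int_absorb2 simp flip: Int_assoc)
  then have "card {S. S \<subseteq> X \<and> card S = n \<and> S \<in> light_samples X c r x}
      \<le> card {S. S \<subseteq> X \<and> card S = n \<and> card (S \<inter> B) \<le> r}"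
    using assms(1) by (intro card_mono) auto
  with tail show ?thesis
    by linarith
qed

lemma card_heavy_or_light_samples_le:
  fixes X :: "'a::linorder set" and c1 c2 :: real
  assumes "finite X" "X \<noteq> {}" "n \<le> card X" "l \<le> r"
    and "c1 * n \<le> real l * card X / 2" "2 * real r * card X \<le> c2 * n"
  shows "real (card {S. S \<subseteq> X \<and> card S = n \<and>
                      (\<exists>x\<in>X. S \<in> heavy_samples X c1 l x \<union> light_samples X c2 r x)})
         \<le> 2 * card X * exp (- real l / 6) * card {S. S \<subseteq> X \<and> card S = n}"
    (is "real (card ?Bad) \<le> _ * real (card ?SS)")
proof -
  define H where "H x = {S. S \<subseteq> X \<and> card S = n \<and> S \<in> heavy_samples X c1 l x}" for x
  define Lt where "Lt x = {S. S \<subseteq> X \<and> card S = n \<and> S \<in> light_samples X c2 r x}" for x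
  have "finite (H x)" "finite (Lt x)" for x
    unfolding H_def Lt_def using assms(1) by simp_all
  have H: "real (card (H x)) \<le> exp (- real l / 6) * card ?SS" for x
    unfolding H_def using card_heavy_samples_le assms(1,2,5) .
  have "real (card (Lt x)) \<le> exp (- real r / 6) * card ?SS" for x
    unfolding Lt_def using card_light_samples_le assms(1-3,6) .
  moreover have "exp (- real r / 6) \<le> exp (- real l / 6)"
    using assms(4) by simp
  ultimately have Lt: "real (card (Lt x)) \<le> exp (- real l / 6) * card ?SS" for x
    by (meson mult_right_mono of_nat_0_le_iff order_trans)
  have "?Bad = (\<Union>x\<in>X. H x \<union> Lt x)"
    unfolding H_def Lt_def by auto
  then have "card ?Bad \<le> (\<Sum>x\<in>X. card (H x \<union> Lt x))"
    by (simp add: card_UN_le assms(1))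
  also have "\<dots> \<le> (\<Sum>x\<in>X. card (H x) + card (Lt x))"
    by (intro sum_mono card_Un_le)
  finally have "real (card ?Bad) \<le> real (\<Sum>x\<in>X. card (H x) + card (Lt x))"
    by (rule of_nat_mono)
  also have "\<dots> = (\<Sum>x\<in>X. real (card (H x)) + real (card (Lt x)))"
    by simp
  also have "\<dots> \<le> (\<Sum>x\<in>X. 2 * exp (- real l / 6) * card ?SS)"
    using add_mono[OF H Lt] by (intro sum_mono) (simp add: mult.assoc)
  also have "\<dots> = 2 * card X * exp (- real l / 6) * card ?SS"
    by simp
  finally show ?thesis .
qed

section \<open>The interval process\<close>

lemma prob_interval_process_compl_le:
  assumes "finite xs" "n \<le> card xs"
    and bad: "\<And>S I. S \<subseteq> xs \<Longrightarrow> card S = n \<Longrightarrow> I \<in> set_pmf (K S) \<Longrightarrow> (S, I) \<notin> G \<Longrightarrow> P S"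
  shows "measure_pmf.prob (interval_process xs n K) (- G)
         \<le> card {S. S \<subseteq> xs \<and> card S = n \<and> P S} / card {S. S \<subseteq> xs \<and> card S = n}"
proof -
  define SS where "SS = {S. S \<subseteq> xs \<and> card S = n}"
  define M where "M = interval_process xs n K"
  have "finite SS"
    unfolding SS_def using assms(1) by simp
  obtain S0 where "S0 \<subseteq> xs" "card S0 = n"
    using obtain_subset_with_card_n assms(2) by blast
  then have "SS \<noteq> {}"
    unfolding SS_def by auto
  have "- G \<inter> set_pmf M \<subseteq> fst -` {S. P S}"
  proof
    fix z assume z: "z \<in> - G \<inter> set_pmf M"
    obtain S I where "z = (S, I)"
      by (cases z)
    with z \<open>finite SS\<close> \<open>SS \<noteq> {}\<close> have "S \<in> SS" "I \<in> set_pmf (K S)" "(S, I) \<notin> G"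
      unfolding M_def interval_process_def SS_def[symmetric] by auto
    then show "z \<in> fst -` {S. P S}"
      using bad \<open>z = (S, I)\<close> unfolding SS_def by auto
  qed
  then have "measure_pmf.prob M (- G \<inter> set_pmf M) \<le> measure_pmf.prob M (fst -` {S. P S})"
    by (rule measure_pmf.finite_measure_mono) simp
  then have "measure_pmf.prob M (- G) \<le> measure_pmf.prob (map_pmf fst M) {S. P S}"
    by (simp add: measure_Int_set_pmf)
  also have "map_pmf fst M = pmf_of_set SS"
    unfolding M_def interval_process_def SS_def
    by (simp add: map_bind_pmf pmf.map_comp o_def bind_return_pmf')
  also have "measure_pmf.prob (pmf_of_set SS) {S. P S} = card (SS \<inter> {S. P S}) / card SS"
    using \<open>SS \<noteq> {}\<close> \<open>finite SS\<close> by (rule measure_pmf_of_set)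
  also have "SS \<inter> {S. P S} = {S. S \<subseteq> xs \<and> card S = n \<and> P S}"
    unfolding SS_def by auto
  finally show ?thesis
    unfolding M_def SS_def .
qed

lemma prob_interval_process_card_estimate:
  fixes xs :: "real set" and l r :: nat
  assumes "finite xs" "n \<le> card xs" "0 < l" "l \<le> r"
    and hits: "\<And>S a b. S \<subseteq> xs \<Longrightarrow> card S = n \<Longrightarrow> (a, b) \<in> set_pmf (K S) \<Longrightarrow>
               l \<le> card (S \<inter> {a..b}) \<and> card (S \<inter> {a..b}) \<le> r"
  shows "measure_pmf.prob (interval_process xs n K)
           {(S, (a, b)). real l / 2 * card xs / n < card (xs \<inter> {a..b})
                       \<and> card (xs \<inter> {a..b}) < 2 * real r * card xs / n}
         \<ge> 1 - 2 * card xs * exp (- real l / 6)"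
proof -
  define SS where "SS = {S. S \<subseteq> xs \<and> card S = n}"
  define c1 c2 where "c1 = real l / 2 * card xs / n" and "c2 = 2 * real r * card xs / n"
  define G where "G = {(S :: real set, (a, b)). c1 < card (xs \<inter> {a..b}) \<and> card (xs \<inter> {a..b}) < c2}"
  define Bad where "Bad S \<longleftrightarrow> (\<exists>x\<in>xs. S \<in> heavy_samples xs c1 l x \<union> light_samples xs c2 r x)" for S
  obtain S0 where "S0 \<subseteq> xs" "card S0 = n"
    using obtain_subset_with_card_n assms(2) by metis
  then have "card SS > 0"
    using assms(1) unfolding SS_def by (auto simp: card_gt_0_iff)
  obtain I0 where "I0 \<in> set_pmf (K S0)"
    using set_pmf_not_empty[of "K S0"] by blast
  then have "l \<le> card (S0 \<inter> {fst I0..snd I0})" "card (S0 \<inter> {fst I0..snd I0}) \<le> n"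
    using hits[of S0 "fst I0" "snd I0"] \<open>S0 \<subseteq> xs\<close> \<open>card S0 = n\<close> assms(1)
    by (auto intro: card_mono finite_subset)
  then have "0 < n" "xs \<noteq> {}"
    using assms(2,3) by auto
  have "measure_pmf.prob (interval_process xs n K) (- G)
      \<le> card {S. S \<subseteq> xs \<and> card S = n \<and> Bad S} / card SS"
    unfolding SS_def
  proof (rule prob_interval_process_compl_le[OF assms(1,2)])
    fix S I assume "S \<subseteq> xs" "card S = n" "I \<in> set_pmf (K S)" "(S, I) \<notin> G"
    then show "Bad S"
      using hits[of S "fst I" "snd I"] assms(3) unfolding Bad_def G_def
      by (intro interval_sample_heavy_or_light[OF assms(1)]) (auto simp: case_prod_beta)
  qed
  also have "\<dots> \<le> 2 * card xs * exp (- real l / 6)"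
    using card_heavy_or_light_samples_le[OF assms(1) \<open>xs \<noteq> {}\<close> assms(2,4), of c1 c2]
      \<open>0 < n\<close> \<open>card SS > 0\<close>
    by (simp add: c1_def c2_def SS_def Bad_def pos_divide_le_eq)
  finally show ?thesis
    using measure_pmf.prob_compl[of G "interval_process xs n K"]
    unfolding G_def c1_def c2_def by (simp add: Compl_eq_Diff_UNIV)
qed

theorem lemmaF4:
  fixes xs :: "real set" and d' n :: nat and L R :: int
    and K :: "real set \<Rightarrow> (real \<times> real) pmf"
  assumes "finite xs" and "card xs = d'" and "xs \<noteq> {}"
    and "L \<le> R" and "n \<le> d'"
    and K_valid: "\<And>S a b. S \<subseteq> xs \<Longrightarrow> card S = n \<Longrightarrow> (a, b) \<in> set_pmf (K S) \<Longrightarrow>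
           a \<le> b \<and> L \<le> int (card (S \<inter> {a..b})) \<and> int (card (S \<inter> {a..b})) \<le> R"
  shows "measure_pmf.prob (interval_process xs n K)
           {(S, (a, b)). real_of_int L / 2 * real d' / real n < real (card (xs \<inter> {a..b}))
                       \<and> real (card (xs \<inter> {a..b})) < 2 * real_of_int R * real d' / real n}
         \<ge> 1 - 3 * real d' * exp (- real_of_int L / 6)"
proof (cases "L \<le> 0")
  case True
  have "d' \<noteq> 0"
    using assms(1-3) by auto
  then have "1 \<le> 3 * real d'" "1 \<le> exp (- real_of_int L / 6)"
    using True by simp_all
  then have "1 - 3 * real d' * exp (- real_of_int L / 6) \<le> 0"
    using mult_mono[of 1 "3 * real d'" 1] by simp
  then show ?thesis
    using measure_nonneg order_trans by blast
next
  case False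
  have "real (nat L) = L" "real (nat R) = R" "nat L \<le> nat R"
    using False assms(4) by simp_all
  have hits: "nat L \<le> card (S \<inter> {a..b}) \<and> card (S \<inter> {a..b}) \<le> nat R"
    if "S \<subseteq> xs" "card S = n" "(a, b) \<in> set_pmf (K S)" for S a b
    using K_valid[OF that] by (auto simp: nat_le_iff le_nat_iff)
  have "measure_pmf.prob (interval_process xs n K)
           {(S, (a, b)). real_of_int L / 2 * real d' / real n < real (card (xs \<inter> {a..b}))
                       \<and> real (card (xs \<inter> {a..b})) < 2 * real_of_int R * real d' / real n}
         \<ge> 1 - 2 * real d' * exp (- real_of_int L / 6)"
    using prob_interval_process_card_estimate[OF assms(1) _ _ \<open>nat L \<le> nat R\<close> hits] False assms(2,5)
    unfolding \<open>real (nat L) = L\<close> \<open>real (nat R) = R\<close> by simp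
  moreover have "2 * real d' * exp (- real_of_int L / 6) \<le> 3 * real d' * exp (- real_of_int L / 6)"
    by simp
  ultimately show ?thesis
    by linarith
qed

end
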